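(* Let $f=(f_1,f_2):\mathbb{R}\times\mathbb{R}^2,\mathbf 0\to\mathbb{R}^2,\mathbf 0$ be an analytic germ in $(t,x_1,x_2)$, $J=\partial(f_1,f_2)/\partial(x_1,x_2)$, $F_i=\partial(f_i,J)/\partial(x_1,x_2)$, and assume $$\dim_{\mathbb{R}}\mathcal{O}_3/\langle t,f_1,f_2\rangle<\infty,\ \dim_{\mathbb{R}}\mathcal{O}_3/\langle t,F_1,F_2\rangle<\infty,\ J(\mathbf{0})=0,\ \dim_{\mathbb{R}}\mathcal{O}_3/\langle t,\partial J/\partial x_1,\partial J/\partial x_2\rangle<\infty.$$ Let $Q=\mathcal{O}_3/\langle t,J,F_1,F_2\rangle$. Then $\dim_{\mathbb{R}}Q<\infty$, i.e. the origin is isolated in $(\{0\}\times\mathbb{C}^2)\cap V_{\mathbb{C}}(J,F_1,F_2)$.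
   Context: $\mathcal{O}_3=\mathbb{R}\{t,x_1,x_2\}$ is the ring of real analytic germs at the origin; $V_{\mathbb{C}}(\cdot)$ is the germ of complex common zeros. *)

theory Defs
  imports "HOL-Analysis.Analysis"
begin

text \<open>Germs in O_3 = R{t,x1,x2} are represented by their Taylor coefficient arrays:
  a i j k is the coefficient of t^i x1^j x2^k.\<close>

type_synonym ps3 = "nat \<Rightarrow> nat \<Rightarrow> nat \<Rightarrow> real"

definition O3 :: "ps3 set" where
  "O3 = {a. \<exists>r>0. (\<lambda>(i,j,k). \<bar>a i j k\<bar> * r ^ (i + j + k)) summable_on (UNIV :: (nat \<times> nat \<times> nat) set)}"

definition ps_add :: "ps3 \<Rightarrow> ps3 \<Rightarrow> ps3" where
  "ps_add a b = (\<lambda>i j k. a i j k + b i j k)"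

definition ps_mul :: "ps3 \<Rightarrow> ps3 \<Rightarrow> ps3" where
  "ps_mul a b = (\<lambda>i j k. \<Sum>p\<le>i. \<Sum>q\<le>j. \<Sum>s\<le>k. a p q s * b (i - p) (j - q) (k - s))"

definition ps_dx1 :: "ps3 \<Rightarrow> ps3" where
  "ps_dx1 a = (\<lambda>i j k. real (Suc j) * a i (Suc j) k)"

definition ps_dx2 :: "ps3 \<Rightarrow> ps3" where
  "ps_dx2 a = (\<lambda>i j k. real (Suc k) * a i j (Suc k))"

definition jac :: "ps3 \<Rightarrow> ps3 \<Rightarrow> ps3" where
  "jac g h = (\<lambda>i j k. ps_mul (ps_dx1 g) (ps_dx2 h) i j k - ps_mul (ps_dx2 g) (ps_dx1 h) i j k)"

definition ps_t :: ps3 where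
  "ps_t = (\<lambda>i j k. if i = 1 \<and> j = 0 \<and> k = 0 then 1 else 0)"

definition ps_at0 :: "ps3 \<Rightarrow> real" where
  "ps_at0 a = a 0 0 0"

definition ideal_gen :: "ps3 list \<Rightarrow> ps3 set" where
  "ideal_gen gs = {g. \<exists>hs. length hs = length gs \<and> set hs \<subseteq> O3 \<and>
      g = foldr ps_add (map2 ps_mul hs gs) (\<lambda>i j k. 0)}"

text \<open>dim_R O_3 / <gs> < infinity: finitely many germs whose classes span the quotient.\<close>
definition fin_codim :: "ps3 list \<Rightarrow> bool" where
  "fin_codim gs \<longleftrightarrow> (\<exists>B. finite B \<and> B \<subseteq> O3 \<and>
     (\<forall>g\<in>O3. \<exists>c. (\<lambda>i j k. g i j k - (\<Sum>b\<in>B. c b * b i j k)) \<in> ideal_gen gs))"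

end

theory Submission
  imports Defs
begin

text \<open>The germs F1, F2 are among the generators of the ideal in the conclusion, so
  that ideal contains the ideal generated by t, F1, F2, which has finite codimension
  by hypothesis.\<close>

lemma zero_in_O3: "(\<lambda>i j k. 0::real) \<in> O3"
  unfolding O3_def by (auto intro!: exI[of _ 1] simp: case_prod_unfold summable_on_0)

lemma ps_add_zero_mul: "ps_add (ps_mul (\<lambda>i j k. 0) x) y = y"
  unfolding ps_add_def ps_mul_def by simp

lemma ideal_gen_insert_subset: "ideal_gen (xs @ ys) \<subseteq> ideal_gen (xs @ x # ys)"
proof
  fix g assume "g \<in> ideal_gen (xs @ ys)"
  then obtain hs where hs: "length hs = length xs + length ys" "set hs \<subseteq> O3"
      and g: "g = foldr ps_add (map2 ps_mul hs (xs @ ys)) (\<lambda>i j k. 0)"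
    unfolding ideal_gen_def by auto
  define hs1 hs2 where "hs1 = take (length xs) hs" and "hs2 = drop (length xs) hs"
  have split: "hs = hs1 @ hs2" "length hs1 = length xs"
    using hs(1) by (simp_all add: hs1_def hs2_def)
  define hs' where "hs' = hs1 @ (\<lambda>i j k. 0) # hs2"
  have "g = foldr ps_add (map2 ps_mul hs' (xs @ x # ys)) (\<lambda>i j k. 0)"
    using split by (simp add: g hs'_def ps_add_zero_mul)
  moreover have "length hs' = length (xs @ x # ys)" "set hs' \<subseteq> O3"
    using hs split zero_in_O3 by (auto simp: hs'_def)
  ultimately show "g \<in> ideal_gen (xs @ x # ys)"
    unfolding ideal_gen_def by blast
qed

lemma fin_codim_mono:
  assumes "ideal_gen gs \<subseteq> ideal_gen gs'" and "fin_codim gs"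
  shows "fin_codim gs'"
proof -
  obtain B where "finite B" "B \<subseteq> O3"
      and "\<forall>g\<in>O3. \<exists>c. (\<lambda>i j k. g i j k - (\<Sum>b\<in>B. c b * b i j k)) \<in> ideal_gen gs"
    using assms(2) unfolding fin_codim_def by auto
  with assms(1) show ?thesis
    unfolding fin_codim_def by (meson subsetD)
qed

theorem lemma6p1:
  fixes f1 f2 :: ps3
  assumes "f1 \<in> O3" and "f2 \<in> O3"
    and "ps_at0 f1 = 0" and "ps_at0 f2 = 0"
    and "fin_codim [ps_t, f1, f2]"
    and "fin_codim [ps_t, jac f1 (jac f1 f2), jac f2 (jac f1 f2)]"
    and "ps_at0 (jac f1 f2) = 0"
    and "fin_codim [ps_t, ps_dx1 (jac f1 f2), ps_dx2 (jac f1 f2)]"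
  shows "fin_codim [ps_t, jac f1 f2, jac f1 (jac f1 f2), jac f2 (jac f1 f2)]"
proof (rule fin_codim_mono[OF _ assms(6)])
  show "ideal_gen [ps_t, jac f1 (jac f1 f2), jac f2 (jac f1 f2)]
      \<subseteq> ideal_gen [ps_t, jac f1 f2, jac f1 (jac f1 f2), jac f2 (jac f1 f2)]"
    using ideal_gen_insert_subset[where xs = "[ps_t]" and x = "jac f1 f2"] by simp
qed

end
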